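(* Let $X$ be a complex Banach space. Let $\mathcal{G}$ be an algebra with unit, $\mathcal{F}$ a unital subalgebra of $\mathcal{G}$, $\Phi:\mathcal{F}\to\mathcal{C}(X)$ a calculus, and $\mathcal{E}\subseteq\mathcal{F}$ a subalgebra which is an algebraic core for $\Phi$. Let $\mathcal{E}'$ be a subalgebra of $\mathcal{G}$ with $\mathcal{E}\subseteq\mathcal{E}'$ and $\Psi:\mathcal{E}'\to\mathcal{L}(X)$ an algebra representation with $\Psi|_{\mathcal{E}}=\Phi|_{\mathcal{E}}$. Let $\mathcal{F}':=\mathrm{anc}(\mathcal{E}',\mathcal{G},\Psi)$ and denote again by $\Psi:\mathcal{F}'\to\mathcal{C}(X)$ the unique calculus on $\mathcal{F}'$ extending $\Psi$. Let $f\in\mathcal{F}$. Then $f\in\mathcal{F}'$ and $\Phi(f)=\Psi(f)$ if any one of the following conditions holds: (1) $f\in\mathcal{F}'$ and $\Psi(f)\in\mathcal{L}(X)$; (2) $f\in\mathcal{F}'$, $\Psi(f)$ is densely defined, and $\Phi(f)\in\mathcal{L}(X)$; (3) for each $e'\in\mathcal{E}'$ there is a $\Psi$-anchor set $\mathcal{M}_{e'}\subseteq\mathcal{E}'$ such that $\mathcal{M}_{e'}e'\subseteq\mathcal{D}'\cdot[f]_{\mathcal{E}}$, where $\mathcal{D}':=\{d'\in\mathcal{F}': d'\mathcal{E}\subseteq\mathcal{E}'\}$; (4) $\mathcal{E}'=\mathcal{E}$; (5) $\mathrm{Z}(\mathcal{E}')\cap[f]_{\mathcal{E}}$ is a $\Psi$-anchor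 set; (6) $\mathcal{E}\subseteq\mathrm{Z}(\mathcal{E}')$; (7) $\mathcal{E}'$ is commutative.
   Context: Algebras need not be commutative; subalgebras need not be unital. $\mathcal{L}(X)$, $\mathcal{C}(X)$: bounded, resp. closed linear operators on $X$; operator inclusions are graph inclusions, sums/products have natural domains, "$Tx=y$" means $x\in\mathrm{dom}(T)$, $Tx=y$. Proto-calculus $\Phi:\mathcal{F}\to\mathcal{C}(X)$: (FC1) $\Phi(\mathbf{1})=I$; (FC2) $\lambda\Phi(f)\subseteq\Phi(\lambda f)$, $\Phi(f)+\Phi(g)\subseteq\Phi(f+g)$; (FC3) $\Phi(f)\Phi(g)\subseteq\Phi(fg)$, $\mathrm{dom}(\Phi(f)\Phi(g))=\mathrm{dom}(\Phi(g))\cap\mathrm{dom}(\Phi(fg))$. For a subset $\mathcal{E}$ and element $f$, $[f]_{\mathcal{E}}=\{e\in\mathcal{E}:ef\in\mathcal{E}\}$. $\mathcal{E}\subseteq\{g:\Phi(g)\in\mathcal{L}(X)\}$ is an algebraic core for $\Phi$ if for all $f\in\mathcal{F}$, $x,y\in X$: $\Phi(f)x=y\iff\Phi(ef)x=\Phi(e)y$ for all $e\in[f]_{\mathcal{E}}$; a calculus is a proto-calculus for which the set of $\Phi$-bounded elements is an algebraic core. For a representation $\Psi$ on $\mathcal{E}'$, a $\Psi$-anchor set is a nonempty $\mathcal{M}\subseteq\mathcal{E}'$ with $\bigcap_{e\in\mathcal{M}}\ker\Psi(e)=\{0\}$. $\mathrm{anc}(\mathcal{E}',\mathcal{G},\Psi):=\{g\in\mathcal{G}: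 [e'g]_{\mathcal{E}'}$ is a $\Psi$-anchor set for all $e'\in\mathcal{E}'\}$; in the present situation this is a unital subalgebra of $\mathcal{G}$ containing $\mathcal{E}'$, and the calculus extending $\Psi$ to it is given by $\Psi(g)x=y\iff\Psi(e'g)x=\Psi(e')y$ for all $e'\in[g]_{\mathcal{E}'}$. $\mathrm{Z}(\mathcal{E}')=\{d\in\mathcal{E}': de=ed\ \forall e\in\mathcal{E}'\}$ is the center. $\mathcal{D}'\cdot[f]_{\mathcal{E}}=\{de: d\in\mathcal{D}', e\in[f]_{\mathcal{E}}\}$. *)

theory Defs
  imports "HOL-Analysis.Analysis"
begin

text \<open>A complex Banach space is modelled as a real Banach space (type class banach)
together with a complex scalar multiplication cs extending the real one and
compatible with the norm.\<close>

definition complex_banach_scal :: "(complex \<Rightarrow> 'x::banach \<Rightarrow> 'x) \<Rightarrow> bool" where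
  "complex_banach_scal cs \<longleftrightarrow>
     (\<forall>r x. cs (complex_of_real r) x = r *\<^sub>R x) \<and>
     (\<forall>a b x. cs (a + b) x = cs a x + cs b x) \<and>
     (\<forall>a x y. cs a (x + y) = cs a x + cs a y) \<and>
     (\<forall>a b x. cs (a * b) x = cs a (cs b x)) \<and>
     (\<forall>a x. norm (cs a x) = cmod a * norm x)"

type_synonym 'x op = "('x \<times> 'x) set"

definition is_op :: "(complex \<Rightarrow> 'x::banach \<Rightarrow> 'x) \<Rightarrow> 'x op \<Rightarrow> bool" where
  "is_op cs T \<longleftrightarrow> (0, 0) \<in> T \<and>
     (\<forall>p\<in>T. \<forall>q\<in>T. p + q \<in> T) \<and>
     (\<forall>a. \<forall>(x, y)\<in>T. (cs a x, cs a y) \<in> T) \<and>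
     (\<forall>x y z. (x, y) \<in> T \<longrightarrow> (x, z) \<in> T \<longrightarrow> y = z)"

definition closed_op :: "(complex \<Rightarrow> 'x::banach \<Rightarrow> 'x) \<Rightarrow> 'x op \<Rightarrow> bool" where
  "closed_op cs T \<longleftrightarrow> is_op cs T \<and> closed T"

definition bounded_op :: "(complex \<Rightarrow> 'x::banach \<Rightarrow> 'x) \<Rightarrow> 'x op \<Rightarrow> bool" where
  "bounded_op cs T \<longleftrightarrow> closed_op cs T \<and> Domain T = UNIV \<and>
     (\<exists>K. \<forall>(x, y)\<in>T. norm y \<le> K * norm x)"

definition op_id :: "'x op" where
  "op_id = {(x, x) | x. True}"

definition op_scal :: "(complex \<Rightarrow> 'x \<Rightarrow> 'x) \<Rightarrow> complex \<Rightarrow> 'x op \<Rightarrow> 'x op" where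
  "op_scal cs a T = {(x, cs a y) | x y. (x, y) \<in> T}"

definition op_sum :: "'x::ab_group_add op \<Rightarrow> 'x op \<Rightarrow> 'x op" where
  "op_sum S T = {(x, y + z) | x y z. (x, y) \<in> S \<and> (x, z) \<in> T}"

text \<open>op_comp S T is the product S T (first T, then S), natural domain\<close>
definition op_comp :: "'x op \<Rightarrow> 'x op \<Rightarrow> 'x op" where
  "op_comp S T = {(x, z) | x y z. (x, y) \<in> T \<and> (y, z) \<in> S}"

text \<open>The ambient unital algebra G is the type 'g (a ring with 1), together with a
complex scalar multiplication sm making it a complex algebra.\<close>

definition complex_alg :: "(complex \<Rightarrow> 'g::ring_1 \<Rightarrow> 'g) \<Rightarrow> bool" where
  "complex_alg sm \<longleftrightarrow>
     (\<forall>x. sm 1 x = x) \<and>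
     (\<forall>a b x. sm (a * b) x = sm a (sm b x)) \<and>
     (\<forall>a b x. sm (a + b) x = sm a x + sm b x) \<and>
     (\<forall>a x y. sm a (x + y) = sm a x + sm a y) \<and>
     (\<forall>a x y. sm a (x * y) = sm a x * y) \<and>
     (\<forall>a x y. sm a (x * y) = x * sm a y)"

definition subalgebra :: "(complex \<Rightarrow> 'g::ring_1 \<Rightarrow> 'g) \<Rightarrow> 'g set \<Rightarrow> bool" where
  "subalgebra sm S \<longleftrightarrow> 0 \<in> S \<and>
     (\<forall>x\<in>S. \<forall>y\<in>S. x + y \<in> S) \<and>
     (\<forall>x\<in>S. \<forall>y\<in>S. x * y \<in> S) \<and>
     (\<forall>a. \<forall>x\<in>S. sm a x \<in> S)"

definition unital_subalgebra :: "(complex \<Rightarrow> 'g::ring_1 \<Rightarrow> 'g) \<Rightarrow> 'g set \<Rightarrow> bool" where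
  "unital_subalgebra sm S \<longleftrightarrow> subalgebra sm S \<and> 1 \<in> S"

definition center :: "'g::ring_1 set \<Rightarrow> 'g set" where
  "center E = {d \<in> E. \<forall>e\<in>E. d * e = e * d}"

definition bracket :: "'g::ring_1 set \<Rightarrow> 'g \<Rightarrow> 'g set" where
  "bracket E f = {e \<in> E. e * f \<in> E}"

definition proto_calculus ::
  "(complex \<Rightarrow> 'g::ring_1 \<Rightarrow> 'g) \<Rightarrow> (complex \<Rightarrow> 'x::banach \<Rightarrow> 'x) \<Rightarrow> 'g set \<Rightarrow> ('g \<Rightarrow> 'x op) \<Rightarrow> bool" where
  "proto_calculus sm cs F \<Phi> \<longleftrightarrow>
     (\<forall>f\<in>F. closed_op cs (\<Phi> f)) \<and>
     \<Phi> 1 = op_id \<and>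
     (\<forall>a. \<forall>f\<in>F. op_scal cs a (\<Phi> f) \<subseteq> \<Phi> (sm a f)) \<and>
     (\<forall>f\<in>F. \<forall>g\<in>F. op_sum (\<Phi> f) (\<Phi> g) \<subseteq> \<Phi> (f + g)) \<and>
     (\<forall>f\<in>F. \<forall>g\<in>F. op_comp (\<Phi> f) (\<Phi> g) \<subseteq> \<Phi> (f * g) \<and>
        Domain (op_comp (\<Phi> f) (\<Phi> g)) = Domain (\<Phi> g) \<inter> Domain (\<Phi> (f * g)))"

definition bounded_elems ::
  "(complex \<Rightarrow> 'x::banach \<Rightarrow> 'x) \<Rightarrow> 'g set \<Rightarrow> ('g \<Rightarrow> 'x op) \<Rightarrow> 'g set" where
  "bounded_elems cs F \<Phi> = {g \<in> F. bounded_op cs (\<Phi> g)}"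

definition algebraic_core ::
  "(complex \<Rightarrow> 'x::banach \<Rightarrow> 'x) \<Rightarrow> 'g::ring_1 set \<Rightarrow> ('g \<Rightarrow> 'x op) \<Rightarrow> 'g set \<Rightarrow> bool" where
  "algebraic_core cs F \<Phi> E \<longleftrightarrow>
     E \<subseteq> bounded_elems cs F \<Phi> \<and>
     (\<forall>f\<in>F. \<forall>x y. (x, y) \<in> \<Phi> f \<longleftrightarrow>
        (\<forall>e\<in>bracket E f. \<exists>z. (y, z) \<in> \<Phi> e \<and> (x, z) \<in> \<Phi> (e * f)))"

definition calculus ::
  "(complex \<Rightarrow> 'g::ring_1 \<Rightarrow> 'g) \<Rightarrow> (complex \<Rightarrow> 'x::banach \<Rightarrow> 'x) \<Rightarrow> 'g set \<Rightarrow> ('g \<Rightarrow> 'x op) \<Rightarrow> bool" where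
  "calculus sm cs F \<Phi> \<longleftrightarrow> proto_calculus sm cs F \<Phi> \<and>
     algebraic_core cs F \<Phi> (bounded_elems cs F \<Phi>)"

definition alg_representation ::
  "(complex \<Rightarrow> 'g::ring_1 \<Rightarrow> 'g) \<Rightarrow> (complex \<Rightarrow> 'x::banach \<Rightarrow> 'x) \<Rightarrow> 'g set \<Rightarrow> ('g \<Rightarrow> 'x op) \<Rightarrow> bool" where
  "alg_representation sm cs E \<Psi> \<longleftrightarrow>
     (\<forall>e\<in>E. bounded_op cs (\<Psi> e)) \<and>
     (\<forall>a. \<forall>e\<in>E. \<Psi> (sm a e) = op_scal cs a (\<Psi> e)) \<and>
     (\<forall>e\<in>E. \<forall>d\<in>E. \<Psi> (e + d) = op_sum (\<Psi> e) (\<Psi> d)) \<and>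
     (\<forall>e\<in>E. \<forall>d\<in>E. \<Psi> (e * d) = op_comp (\<Psi> e) (\<Psi> d))"

definition anchor_set :: "'g set \<Rightarrow> ('g \<Rightarrow> 'x::banach op) \<Rightarrow> 'g set \<Rightarrow> bool" where
  "anchor_set E \<Psi> M \<longleftrightarrow> M \<noteq> {} \<and> M \<subseteq> E \<and>
     (\<forall>x. (\<forall>e\<in>M. (x, 0) \<in> \<Psi> e) \<longrightarrow> x = 0)"

text \<open>anc(E', G, Psi) with G = UNIV (the whole type 'g)\<close>
definition anc :: "'g::ring_1 set \<Rightarrow> ('g \<Rightarrow> 'x::banach op) \<Rightarrow> 'g set" where
  "anc E \<Psi> = {g. \<forall>e\<in>E. anchor_set E \<Psi> (bracket E (e * g))}"

text \<open>the calculus on anc(E', G, Psi) extending Psi\<close>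
definition anc_ext :: "'g::ring_1 set \<Rightarrow> ('g \<Rightarrow> 'x::banach op) \<Rightarrow> 'g \<Rightarrow> 'x op" where
  "anc_ext E \<Psi> g = {(x, y). \<forall>e\<in>bracket E g. \<exists>z. (y, z) \<in> \<Psi> e \<and> (x, z) \<in> \<Psi> (e * g)}"

end

theory Submission
  imports Defs
begin

text \<open>Write \<open>\<psi> e\<close> for the bounded operator \<open>\<Psi>(e)\<close>. Because \<open>E\<close> is an algebraic core
and \<open>\<Psi> = \<Phi>\<close> on \<open>E\<close>, \<open>\<Phi>(f) x = y\<close> holds iff \<open>\<psi> e y = \<psi> (e f) x\<close> for all \<open>e \<in> [f]_E\<close>, while
\<open>\<Psi>(f) x = y\<close> demands the same equations for all \<open>e \<in> [f]_E'\<close>, a larger set; so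
\<open>\<Psi>(f) \<subseteq> \<Phi>(f)\<close> always. Under (1) equality holds because \<open>\<Psi>(f)\<close> is total; under (2)
because \<open>\<Psi>(f)\<close> is closed with dense domain inside the bounded \<open>\<Phi>(f)\<close>. Under (3) an
equation \<open>\<psi> e' y = \<psi> (e' f) x\<close> is tested against the anchor set \<open>M_e'\<close>: every \<open>m e'\<close>
factors as \<open>d e\<close> with \<open>e \<in> [f]_E\<close>, and left multiplication by an anchored \<open>d\<close> preserves
the known equation \<open>\<psi> e y = \<psi> (e f) x\<close>. Conditions (4)--(7) are special cases of (3).\<close>

definition op_apply :: "'x op \<Rightarrow> 'x \<Rightarrow> 'x" where
  "op_apply T x = (SOME y. (x, y) \<in> T)"

lemma bounded_op_graph_iff:
  assumes "bounded_op cs T"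
  shows "(x, y) \<in> T \<longleftrightarrow> y = op_apply T x"
proof -
  from assms have "Domain T = UNIV" and op: "is_op cs T"
    by (auto simp: bounded_op_def closed_op_def)
  then have "(x, op_apply T x) \<in> T"
    unfolding op_apply_def by (metis Domain_iff UNIV_I someI)
  with op show ?thesis
    unfolding is_op_def by blast
qed

lemma bounded_linear_op_apply:
  assumes X: "complex_banach_scal cs" and T: "bounded_op cs T"
  shows "bounded_linear (op_apply T)"
proof -
  have op: "is_op cs T"
    using T by (simp add: bounded_op_def closed_op_def)
  have graph: "(x, op_apply T x) \<in> T" for x
    using bounded_op_graph_iff[OF T] by blast
  obtain K where K: "\<forall>(x, y)\<in>T. norm y \<le> K * norm x"
    using T bounded_op_def by blast
  show ?thesis
  proof (rule bounded_linear_intro)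
    fix x y
    have "(x, op_apply T x) + (y, op_apply T y) \<in> T"
      using op graph unfolding is_op_def by blast
    then show "op_apply T (x + y) = op_apply T x + op_apply T y"
      using bounded_op_graph_iff[OF T] by simp
  next
    fix r x
    have "(cs (complex_of_real r) x, cs (complex_of_real r) (op_apply T x)) \<in> T"
      using op graph unfolding is_op_def by blast
    then show "op_apply T (r *\<^sub>R x) = r *\<^sub>R op_apply T x"
      using X bounded_op_graph_iff[OF T] by (simp add: complex_banach_scal_def)
  next
    fix x
    show "norm (op_apply T x) \<le> norm x * K"
      using K graph[of x] by (auto simp: mult.commute)
  qed
qed

lemma is_op_eq_if_total_subset:
  assumes "is_op cs T" "S \<subseteq> T" "Domain S = UNIV"
  shows "S = T"
proof
  show "T \<subseteq> S"
  proof clarify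
    fix x y assume "(x, y) \<in> T"
    moreover obtain z where "(x, z) \<in> S"
      using assms(3) by blast
    ultimately show "(x, y) \<in> S"
      using assms(1,2) unfolding is_op_def by blast
  qed
qed (fact assms(2))

lemma closed_subset_bounded_op_eq:
  assumes X: "complex_banach_scal cs" and T: "bounded_op cs T"
    and S: "closed S" "S \<subseteq> T" "closure (Domain S) = UNIV"
  shows "S = T"
proof (rule is_op_eq_if_total_subset)
  show "is_op cs T"
    using T by (simp add: bounded_op_def closed_op_def)
  let ?graph = "\<lambda>x. (x, op_apply T x)"
  have "continuous_on UNIV ?graph"
    using bounded_linear_op_apply[OF X T]
    by (intro continuous_intros linear_continuous_on)
  moreover have "?graph ` Domain S \<subseteq> S"
    using S(2) bounded_op_graph_iff[OF T] by fastforce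
  ultimately have "?graph ` closure (Domain S) \<subseteq> S"
    using S(1) by (intro image_closure_subset) (auto intro: continuous_on_subset)
  then show "Domain S = UNIV"
    using S(3) by auto
qed (fact S(2))

lemma anc_ext_antimono:
  assumes "E \<subseteq> E'"
  shows "anc_ext E' \<Psi> g \<subseteq> anc_ext E \<Psi> g"
  using assms unfolding anc_ext_def bracket_def by blast

lemma anc_ext_cong:
  assumes "\<forall>e\<in>E. \<Psi> e = \<Phi> e"
  shows "anc_ext E \<Psi> g = anc_ext E \<Phi> g"
  using assms unfolding anc_ext_def bracket_def by auto

lemma algebraic_core_eq_anc_ext:
  assumes "algebraic_core cs F \<Phi> E" "f \<in> F"
  shows "\<Phi> f = anc_ext E \<Phi> f"
  using assms unfolding algebraic_core_def anc_ext_def by auto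

lemma anchor_set_mono:
  assumes "anchor_set E \<Psi> M" "M \<subseteq> N" "N \<subseteq> E"
  shows "anchor_set E \<Psi> N"
  using assms unfolding anchor_set_def by blast

lemma anchor_set_bracket:
  assumes "is_op cs (anc_ext E \<Psi> g)" "\<forall>e\<in>E. is_op cs (\<Psi> e)" "0 \<in> E" "E \<subseteq> E'"
  shows "anchor_set E' \<Psi> (bracket E g)"
  unfolding anchor_set_def
proof (intro conjI allI impI)
  show "bracket E g \<noteq> {}" "bracket E g \<subseteq> E'"
    using assms(3,4) by (auto simp: bracket_def)
next
  fix x assume x: "\<forall>e\<in>bracket E g. (x, 0) \<in> \<Psi> e"
  have "(0, x) \<in> anc_ext E \<Psi> g"
    using x assms(2) unfolding anc_ext_def bracket_def is_op_def by blast
  moreover have "(0, 0) \<in> anc_ext E \<Psi> g"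
    using assms(1) unfolding is_op_def by blast
  ultimately show "x = 0"
    using assms(1) unfolding is_op_def by blast
qed

definition anchored_factorization :: "'g::ring_1 set \<Rightarrow> ('g \<Rightarrow> 'x::banach op) \<Rightarrow> 'g set \<Rightarrow> 'g \<Rightarrow> bool" where
  "anchored_factorization E' \<Psi> E f \<longleftrightarrow>
     (\<forall>e'\<in>E'. \<exists>M. anchor_set E' \<Psi> M \<and>
        (\<lambda>m. m * e') ` M \<subseteq>
          {d * e | d e. d \<in> {d' \<in> anc E' \<Psi>. \<forall>e\<in>E. d' * e \<in> E'} \<and> e \<in> bracket E f})"

lemma anchored_factorizationE:
  assumes "anchored_factorization E' \<Psi> E f" "e' \<in> E'"
  obtains M where "anchor_set E' \<Psi> M"
    and "\<And>m. m \<in> M \<Longrightarrow> \<exists>d e. m * e' = d * e \<and> d \<in> anc E' \<Psi> \<and> (\<forall>c\<in>E. d * c \<in> E') \<and>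
      e \<in> bracket E f"
proof -
  from assms obtain M where "anchor_set E' \<Psi> M"
    and "(\<lambda>m. m * e') ` M \<subseteq> {d * e | d e. d \<in> {d' \<in> anc E' \<Psi>. \<forall>e\<in>E. d' * e \<in> E'} \<and> e \<in> bracket E f}"
    unfolding anchored_factorization_def by blast
  then show thesis
    using that unfolding image_subset_iff by blast
qed

locale bounded_representation =
  fixes sm :: "complex \<Rightarrow> 'g::ring_1 \<Rightarrow> 'g"
    and cs :: "complex \<Rightarrow> 'x::banach \<Rightarrow> 'x"
    and E' :: "'g set"
    and \<Psi> :: "'g \<Rightarrow> 'x op"
  assumes scal: "complex_banach_scal cs"
    and subalgebra: "subalgebra sm E'"
    and representation: "alg_representation sm cs E' \<Psi>"
begin

abbreviation \<psi> :: "'g \<Rightarrow> 'x \<Rightarrow> 'x" where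
  "\<psi> e \<equiv> op_apply (\<Psi> e)"

lemma mult_closed_E': "a \<in> E' \<Longrightarrow> b \<in> E' \<Longrightarrow> a * b \<in> E'"
  using subalgebra by (simp add: subalgebra_def)

lemma bounded_op_Psi: "e \<in> E' \<Longrightarrow> bounded_op cs (\<Psi> e)"
  using representation by (simp add: alg_representation_def)

lemma graph_iff: "e \<in> E' \<Longrightarrow> (x, y) \<in> \<Psi> e \<longleftrightarrow> y = \<psi> e x"
  using bounded_op_Psi bounded_op_graph_iff by blast

lemma bounded_linear_psi: "e \<in> E' \<Longrightarrow> bounded_linear (\<psi> e)"
  using bounded_op_Psi bounded_linear_op_apply[OF scal] by blast

lemma psi_mult:
  assumes "a \<in> E'" "b \<in> E'"
  shows "\<psi> (a * b) x = \<psi> a (\<psi> b x)"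
proof -
  have "\<Psi> (a * b) = op_comp (\<Psi> a) (\<Psi> b)"
    using representation assms by (simp add: alg_representation_def)
  then have "(x, \<psi> a (\<psi> b x)) \<in> \<Psi> (a * b)"
    using assms graph_iff unfolding op_comp_def by blast
  then show ?thesis
    using graph_iff[OF mult_closed_E'[OF assms]] by simp
qed

lemma anc_ext_iff:
  assumes "E \<subseteq> E'"
  shows "(x, y) \<in> anc_ext E \<Psi> g \<longleftrightarrow> (\<forall>e\<in>bracket E g. \<psi> e y = \<psi> (e * g) x)"
proof -
  have "(\<exists>z. (y, z) \<in> \<Psi> e \<and> (x, z) \<in> \<Psi> (e * g)) \<longleftrightarrow> \<psi> e y = \<psi> (e * g) x"
    if "e \<in> bracket E g" for e
  proof -
    have "e \<in> E'" "e * g \<in> E'"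
      using that assms unfolding bracket_def by auto
    then show ?thesis
      using graph_iff by auto
  qed
  then show ?thesis
    unfolding anc_ext_def by simp
qed

lemma closed_anc_ext: "closed (anc_ext E' \<Psi> g)"
proof -
  have "anc_ext E' \<Psi> g = (\<Inter>e\<in>bracket E' g. {p. \<psi> e (snd p) = \<psi> (e * g) (fst p)})"
    by (auto simp: anc_ext_iff[OF order_refl])
  moreover have "closed {p. \<psi> e (snd p) = \<psi> (e * g) (fst p)}" if "e \<in> bracket E' g" for e
  proof -
    have "e \<in> E'" "e * g \<in> E'"
      using that by (auto simp: bracket_def)
    then have "bounded_linear (\<lambda>p. \<psi> e (snd p))" "bounded_linear (\<lambda>p. \<psi> (e * g) (fst p))"
      using bounded_linear_psi bounded_linear_compose bounded_linear_fst bounded_linear_snd by blast+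
    then show ?thesis
      by (intro closed_Collect_eq linear_continuous_on)
  qed
  ultimately show ?thesis
    by auto
qed

lemma anchor_set_eqI:
  assumes M: "anchor_set E' \<Psi> M" and eq: "\<And>m. m \<in> M \<Longrightarrow> \<psi> m u = \<psi> m v"
  shows "u = v"
proof -
  have "(u - v, 0) \<in> \<Psi> m" if "m \<in> M" for m
  proof -
    have "m \<in> E'"
      using M that unfolding anchor_set_def by blast
    then have "\<psi> m (u - v) = \<psi> m u - \<psi> m v"
      using bounded_linear_psi linear_diff bounded_linear.linear by blast
    then show ?thesis
      using eq[OF that] graph_iff[OF \<open>m \<in> E'\<close>] by simp
  qed
  then have "u - v = 0"
    using M unfolding anchor_set_def by blast
  then show ?thesis
    by simp
qed

lemma mem_ancI:
  assumes "anchor_set E' \<Psi> E'" "\<forall>e\<in>E'. e * g \<in> E'"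
  shows "g \<in> anc E' \<Psi>"
proof -
  have "bracket E' (e * g) = E'" if "e \<in> E'" for e
    using assms(2) that mult_closed_E' unfolding bracket_def by auto
  then show ?thesis
    using assms(1) unfolding anc_def by simp
qed

lemma anc_mult_eq:
  assumes anchor: "anchor_set E' \<Psi> E'" and d: "d \<in> anc E' \<Psi>"
    and ab: "a \<in> E'" "b \<in> E'" "d * a \<in> E'" "d * b \<in> E'"
    and eq: "\<psi> a y = \<psi> b x"
  shows "\<psi> (d * a) y = \<psi> (d * b) x"
proof (rule anchor_set_eqI[OF anchor])
  fix e assume e: "e \<in> E'"
  show "\<psi> e (\<psi> (d * a) y) = \<psi> e (\<psi> (d * b) x)"
    \<comment> \<open>on the anchor set \<open>[e d]_E'\<close> the products \<open>c (e d)\<close> lie in \<open>E'\<close>, which absorbs \<open>d\<close>\<close>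
  proof (rule anchor_set_eqI)
    show "anchor_set E' \<Psi> (bracket E' (e * d))"
      using d e by (simp add: anc_def)
  next
    fix c assume "c \<in> bracket E' (e * d)"
    then have c: "c \<in> E'" "c * (e * d) \<in> E'"
      by (simp_all add: bracket_def)
    have "\<psi> c (\<psi> e (\<psi> (d * h) z)) = \<psi> (c * (e * d)) (\<psi> h z)"
      if "h \<in> E'" "d * h \<in> E'" for h z
    proof -
      have "\<psi> c (\<psi> e (\<psi> (d * h) z)) = \<psi> (c * e * (d * h)) z"
        using c(1) e that by (simp add: psi_mult mult_closed_E')
      also have "\<dots> = \<psi> (c * (e * d) * h) z"
        by (simp add: mult.assoc)
      finally show ?thesis
        using c(2) that(1) by (simp add: psi_mult)
    qed
    then show "\<psi> c (\<psi> e (\<psi> (d * a) y)) = \<psi> c (\<psi> e (\<psi> (d * b) x))"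
      using ab eq by simp
  qed
qed

lemma mem_anc_if_anchored_factorization:
  assumes "anchored_factorization E' \<Psi> E f"
  shows "f \<in> anc E' \<Psi>"
  unfolding anc_def
proof (intro CollectI ballI)
  fix e' assume e': "e' \<in> E'"
  obtain M where M: "anchor_set E' \<Psi> M" and factor: "\<And>m. m \<in> M \<Longrightarrow> \<exists>d e. m * e' = d * e \<and>
      d \<in> anc E' \<Psi> \<and> (\<forall>c\<in>E. d * c \<in> E') \<and> e \<in> bracket E f"
    using anchored_factorizationE[OF assms e'] by blast
  have "M \<subseteq> bracket E' (e' * f)"
  proof
    fix m assume m: "m \<in> M"
    then obtain d e where "m * e' = d * e" "\<forall>c\<in>E. d * c \<in> E'" "e \<in> bracket E f"
      using factor by blast
    moreover have "m \<in> E'"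
      using M m unfolding anchor_set_def by blast
    ultimately show "m \<in> bracket E' (e' * f)"
      unfolding bracket_def by (auto simp flip: mult.assoc)
  qed
  then show "anchor_set E' \<Psi> (bracket E' (e' * f))"
    by (rule anchor_set_mono[OF M]) (auto simp: bracket_def)
qed

lemma anc_ext_subset_if_anchored_factorization:
  assumes factorization: "anchored_factorization E' \<Psi> E f"
    and anchor: "anchor_set E' \<Psi> E'" and "E \<subseteq> E'"
  shows "anc_ext E \<Psi> f \<subseteq> anc_ext E' \<Psi> f"
proof clarify
  fix x y assume "(x, y) \<in> anc_ext E \<Psi> f"
  then have core: "\<psi> e y = \<psi> (e * f) x" if "e \<in> bracket E f" for e
    using that anc_ext_iff[OF \<open>E \<subseteq> E'\<close>] by blast
  show "(x, y) \<in> anc_ext E' \<Psi> f"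
    unfolding anc_ext_iff[OF order_refl]
  proof
    fix e' assume "e' \<in> bracket E' f"
    then have e': "e' \<in> E'" "e' * f \<in> E'"
      by (simp_all add: bracket_def)
    obtain M where M: "anchor_set E' \<Psi> M" and factor: "\<And>m. m \<in> M \<Longrightarrow> \<exists>d e. m * e' = d * e \<and>
        d \<in> anc E' \<Psi> \<and> (\<forall>c\<in>E. d * c \<in> E') \<and> e \<in> bracket E f"
      using anchored_factorizationE[OF factorization e'(1)] by blast
    show "\<psi> e' y = \<psi> (e' * f) x"
    proof (rule anchor_set_eqI[OF M])
      fix m assume m: "m \<in> M"
      then obtain d e where de: "m * e' = d * e" "d \<in> anc E' \<Psi>" "\<forall>c\<in>E. d * c \<in> E'"
        "e \<in> bracket E f"
        using factor by blast
      have mE': "m \<in> E'"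
        using M m unfolding anchor_set_def by blast
      have e: "e \<in> E" "e * f \<in> E"
        using de(4) by (simp_all add: bracket_def)
      have "\<psi> m (\<psi> e' y) = \<psi> (d * e) y"
        using mE' e'(1) de(1) by (simp flip: psi_mult)
      also have "\<dots> = \<psi> (d * (e * f)) x"
        using anc_mult_eq[OF anchor de(2)] e de(3) core[OF de(4)] \<open>E \<subseteq> E'\<close> by blast
      also have "\<dots> = \<psi> (m * (e' * f)) x"
        using de(1) by (metis mult.assoc)
      also have "\<dots> = \<psi> m (\<psi> (e' * f) x)"
        using mE' e'(2) by (simp add: psi_mult)
      finally show "\<psi> m (\<psi> e' y) = \<psi> m (\<psi> (e' * f) x)" .
    qed
  qed
qed

end


locale calculus_extension = bounded_representation sm cs E' \<Psi>
  for sm :: "complex \<Rightarrow> 'g::ring_1 \<Rightarrow> 'g" and cs :: "complex \<Rightarrow> 'x::banach \<Rightarrow> 'x" and E' \<Psi> +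
  fixes F E :: "'g set" and \<Phi> :: "'g \<Rightarrow> 'x op"
  assumes unital_subalgebra_F: "unital_subalgebra sm F"
    and proto_calculus: "proto_calculus sm cs F \<Phi>"
    and subalgebra_E: "subalgebra sm E"
    and core: "algebraic_core cs F \<Phi> E"
    and E_subset: "E \<subseteq> E'"
    and agree: "\<forall>e\<in>E. \<Psi> e = \<Phi> e"
begin

lemma core_eq_anc_ext: "g \<in> F \<Longrightarrow> \<Phi> g = anc_ext E \<Psi> g"
  using algebraic_core_eq_anc_ext[OF core] anc_ext_cong[OF agree] by simp

lemma anc_ext_subset: "g \<in> F \<Longrightarrow> anc_ext E' \<Psi> g \<subseteq> \<Phi> g"
  using anc_ext_antimono[OF E_subset] core_eq_anc_ext by simp

lemma is_op_Phi: "g \<in> F \<Longrightarrow> is_op cs (\<Phi> g)"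
  using proto_calculus by (simp add: proto_calculus_def closed_op_def)

lemma anchor_set_bracket_core:
  assumes "g \<in> F"
  shows "anchor_set E' \<Psi> (bracket E g)"
proof (rule anchor_set_bracket)
  show "is_op cs (anc_ext E \<Psi> g)"
    using assms is_op_Phi core_eq_anc_ext by simp
  show "\<forall>e\<in>E. is_op cs (\<Psi> e)"
    using E_subset bounded_op_Psi by (auto simp: bounded_op_def closed_op_def)
  show "0 \<in> E"
    using subalgebra_E by (simp add: subalgebra_def)
qed (fact E_subset)

lemma anchor_set_E': "anchor_set E' \<Psi> E'"
proof -
  have "anchor_set E' \<Psi> (bracket E 1)"
    using unital_subalgebra_F anchor_set_bracket_core by (simp add: unital_subalgebra_def)
  then show ?thesis
    by (rule anchor_set_mono) (use E_subset in \<open>auto simp: bracket_def\<close>)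
qed

lemma eq_if_bounded_anc_ext:
  assumes "f \<in> F" "bounded_op cs (anc_ext E' \<Psi> f)"
  shows "\<Phi> f = anc_ext E' \<Psi> f"
  using is_op_eq_if_total_subset[OF is_op_Phi anc_ext_subset] assms by (simp add: bounded_op_def)

lemma eq_if_dense_anc_ext:
  assumes "f \<in> F" "closure (Domain (anc_ext E' \<Psi> f)) = UNIV" "bounded_op cs (\<Phi> f)"
  shows "\<Phi> f = anc_ext E' \<Psi> f"
  using closed_subset_bounded_op_eq[OF scal assms(3) closed_anc_ext anc_ext_subset] assms by simp

lemma eq_if_anchored_factorization:
  assumes "f \<in> F" "anchored_factorization E' \<Psi> E f"
  shows "f \<in> anc E' \<Psi> \<and> \<Phi> f = anc_ext E' \<Psi> f"
  using mem_anc_if_anchored_factorization anc_ext_subset_if_anchored_factorization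
    anchor_set_E' E_subset anc_ext_subset core_eq_anc_ext assms by blast

lemma anchored_factorization_if_eq:
  assumes "E' = E" "f \<in> F"
  shows "anchored_factorization E' \<Psi> E f"
  unfolding anchored_factorization_def
proof
  fix e' assume e': "e' \<in> E'"
  have "E \<subseteq> F"
    using core by (auto simp: algebraic_core_def bounded_elems_def)
  then have "anchor_set E' \<Psi> (bracket E (e' * f))"
    using unital_subalgebra_F e' assms by (intro anchor_set_bracket_core) (auto simp: unital_subalgebra_def subalgebra_def)
  moreover have "(\<lambda>m. m * e') ` bracket E (e' * f) \<subseteq>
      {d * e | d e. d \<in> {d' \<in> anc E' \<Psi>. \<forall>e\<in>E. d' * e \<in> E'} \<and> e \<in> bracket E f}"
  proof clarify
    fix m assume "m \<in> bracket E (e' * f)"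
    then have "m * e' \<in> bracket E f"
      using e' assms(1) mult_closed_E' unfolding bracket_def by (auto simp: mult.assoc)
    moreover have "1 \<in> anc E' \<Psi>"
      using mem_ancI[OF anchor_set_E'] by simp
    ultimately show "\<exists>d e. m * e' = d * e \<and> d \<in> {d' \<in> anc E' \<Psi>. \<forall>e\<in>E. d' * e \<in> E'} \<and>
        e \<in> bracket E f"
      using assms(1) by (intro exI[of _ 1] exI[of _ "m * e'"]) simp
  qed
  ultimately show "\<exists>M. anchor_set E' \<Psi> M \<and> (\<lambda>m. m * e') ` M \<subseteq>
      {d * e | d e. d \<in> {d' \<in> anc E' \<Psi>. \<forall>e\<in>E. d' * e \<in> E'} \<and> e \<in> bracket E f}"
    by blast
qed

lemma anchored_factorization_if_central_anchor:
  assumes "anchor_set E' \<Psi> (center E' \<inter> bracket E f)"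
  shows "anchored_factorization E' \<Psi> E f"
  unfolding anchored_factorization_def
proof
  fix e' assume e': "e' \<in> E'"
  have "e' \<in> anc E' \<Psi>" "\<forall>c\<in>E. e' * c \<in> E'"
    using mem_ancI[OF anchor_set_E'] e' E_subset mult_closed_E' by blast+
  moreover have "m * e' = e' * m" if "m \<in> center E'" for m
    using that e' by (simp add: center_def)
  ultimately have "(\<lambda>m. m * e') ` (center E' \<inter> bracket E f) \<subseteq>
      {d * e | d e. d \<in> {d' \<in> anc E' \<Psi>. \<forall>e\<in>E. d' * e \<in> E'} \<and> e \<in> bracket E f}"
    by blast
  with assms show "\<exists>M. anchor_set E' \<Psi> M \<and> (\<lambda>m. m * e') ` M \<subseteq>
      {d * e | d e. d \<in> {d' \<in> anc E' \<Psi>. \<forall>e\<in>E. d' * e \<in> E'} \<and> e \<in> bracket E f}"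
    by blast
qed

lemma central_anchor_if_central:
  assumes "E \<subseteq> center E'" "f \<in> F"
  shows "anchor_set E' \<Psi> (center E' \<inter> bracket E f)"
proof -
  have "center E' \<inter> bracket E f = bracket E f"
    using assms(1) by (auto simp: bracket_def)
  then show ?thesis
    using anchor_set_bracket_core[OF assms(2)] by simp
qed

end


theorem theorem6p7:
  fixes cs :: "complex \<Rightarrow> 'x::banach \<Rightarrow> 'x"
    and sm :: "complex \<Rightarrow> 'g::ring_1 \<Rightarrow> 'g"
    and F E E' :: "'g set"
    and \<Phi> \<Psi> :: "'g \<Rightarrow> 'x op"
    and f :: 'g
  assumes X: "complex_banach_scal cs"
    and G: "complex_alg sm"
    and F: "unital_subalgebra sm F"
    and Phi: "calculus sm cs F \<Phi>"
    and E: "subalgebra sm E" "E \<subseteq> F"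
    and core: "algebraic_core cs F \<Phi> E"
    and E': "subalgebra sm E'" "E \<subseteq> E'"
    and Psi: "alg_representation sm cs E' \<Psi>"
    and agree: "\<forall>e\<in>E. \<Psi> e = \<Phi> e"
    and f: "f \<in> F"
    and cond:
      "(f \<in> anc E' \<Psi> \<and> bounded_op cs (anc_ext E' \<Psi> f))
     \<or> (f \<in> anc E' \<Psi> \<and> closure (Domain (anc_ext E' \<Psi> f)) = UNIV \<and> bounded_op cs (\<Phi> f))
     \<or> (\<forall>e'\<in>E'. \<exists>M. anchor_set E' \<Psi> M \<and>
          (\<lambda>m. m * e') ` M \<subseteq>
            {d * e | d e. d \<in> {d' \<in> anc E' \<Psi>. \<forall>e\<in>E. d' * e \<in> E'} \<and> e \<in> bracket E f})
     \<or> E' = E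
     \<or> anchor_set E' \<Psi> (center E' \<inter> bracket E f)
     \<or> E \<subseteq> center E'
     \<or> (\<forall>a\<in>E'. \<forall>b\<in>E'. a * b = b * a)"
  shows "f \<in> anc E' \<Psi> \<and> \<Phi> f = anc_ext E' \<Psi> f"
proof -
  interpret calculus_extension sm cs E' \<Psi> F E \<Phi>
    using X E'(1) Psi F Phi E(1) core E'(2) agree
    by unfold_locales (simp_all add: calculus_def)
  have factorization: ?thesis if "anchored_factorization E' \<Psi> E f"
    using eq_if_anchored_factorization[OF f that] by simp
  have central: ?thesis if "anchor_set E' \<Psi> (center E' \<inter> bracket E f)"
    using factorization[OF anchored_factorization_if_central_anchor[OF that]] .
  from cond show ?thesis
  proof (elim disjE)
    assume "f \<in> anc E' \<Psi> \<and> bounded_op cs (anc_ext E' \<Psi> f)"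
    then show ?thesis
      using eq_if_bounded_anc_ext[OF f] by simp
  next
    assume "f \<in> anc E' \<Psi> \<and> closure (Domain (anc_ext E' \<Psi> f)) = UNIV \<and> bounded_op cs (\<Phi> f)"
    then show ?thesis
      using eq_if_dense_anc_ext[OF f] by simp
  next
    assume "\<forall>e'\<in>E'. \<exists>M. anchor_set E' \<Psi> M \<and> (\<lambda>m. m * e') ` M \<subseteq>
      {d * e | d e. d \<in> {d' \<in> anc E' \<Psi>. \<forall>e\<in>E. d' * e \<in> E'} \<and> e \<in> bracket E f}"
    then show ?thesis
      by (intro factorization) (simp only: anchored_factorization_def)
  next
    assume "E' = E"
    then show ?thesis
      using factorization anchored_factorization_if_eq f by blast
  next
    assume "anchor_set E' \<Psi> (center E' \<inter> bracket E f)"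
    then show ?thesis
      by (rule central)
  next
    assume "E \<subseteq> center E'"
    then show ?thesis
      using central central_anchor_if_central f by blast
  next
    assume "\<forall>a\<in>E'. \<forall>b\<in>E'. a * b = b * a"
    then have "E \<subseteq> center E'"
      using E'(2) by (auto simp: center_def)
    then show ?thesis
      using central central_anchor_if_central f by blast
  qed
qed

end
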